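(* Let $\Gamma$ be a cycle graph (a connected metric graph all of whose vertices have degree two) whose edge lengths are natural numbers $L(e)$, $e\in\mathcal E$, with $\gcd\{L(e):e\in\mathcal E\}=1$ and with $\widetilde E:=\sum_{e\in\mathcal E}L(e)$ odd. Then $$\lambda_{\widetilde E+1}\big(L^{\rm st}(\Gamma)\big)>\lambda_{\widetilde E}\big(L^{\rm D}(\Gamma)\big),$$ i.e. the inequality $\lambda_{n+1}(L^{\rm st}(\Gamma))\le\lambda_n(L^{\rm D}(\Gamma))$ fails for $n=\widetilde E$.
   Context: A finite compact metric graph $\Gamma$ consists of finitely many edges $e_n=[x_{2n-1},x_{2n}]\subset\mathbb R$ of positive lengths $L(e_n)$ and a vertex set $\mathcal V$ which is a partition of the set of all edge endpoints; $\mathcal E$ is the edge set; the degree of a vertex is the number of endpoints it contains. $f(x_j)$ denotes the limit of $f$ at endpoint $x_j$, and $\partial f(x_j)=f'(x_j)$ if $x_j$ is a left endpoint, $-f'(x_j)$ if a right endpoint. The standard Laplacian $L^{\rm st}(\Gamma)$ acts as $-f''$ on each edge with domain all $f\in W^2_2(\Gamma\setminus\mathcal V)=\bigoplus_nW^2_2(e_n)$ with, at every vertex $v$, $f(x_i)=f(x_j)$ for $x_i,x_j\in v$ and $\sum_{x_j\in v}\partial f(x_j)=0$. The Dirichlet Laplacian $L^{\rm D}(\Gamma)$ acts as $-f''$ with domain all $f\in W^2_2(\Gamma\setminus\mathcal V)$ with $f(x_j)=0$ at every endpoint $x_j$. Eigenvalues $\lambda_1\le\lambda_2\le\dots$ are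 counted with multiplicities. *)

theory Defs
  imports "HOL-Analysis.Analysis"
begin

text \<open>Edge i is modelled as the interval
  [0, L i]; its endpoints are (i, False) (left endpoint, at 0) and (i, True)
  (right endpoint, at L i). The vertex set V is a partition of the set of endpoints.\<close>

definition metric_graph :: "nat \<Rightarrow> (nat \<Rightarrow> real) \<Rightarrow> (nat \<times> bool) set set \<Rightarrow> bool" where
  "metric_graph m L V \<longleftrightarrow>
     (\<forall>i<m. L i > 0) \<and>
     (\<forall>v\<in>V. v \<noteq> {}) \<and>
     (\<forall>v\<in>V. \<forall>w\<in>V. v \<noteq> w \<longrightarrow> v \<inter> w = {}) \<and>
     \<Union>V = {..<m} \<times> (UNIV :: bool set)"

definition vdegree :: "(nat \<times> bool) set \<Rightarrow> nat" where
  "vdegree v = card v"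

definition edge_adj :: "nat \<Rightarrow> (nat \<times> bool) set set \<Rightarrow> (nat \<times> nat) set" where
  "edge_adj m V = {(i, j). i < m \<and> j < m \<and> (\<exists>v\<in>V. \<exists>a b. (i, a) \<in> v \<and> (j, b) \<in> v)}"

definition graph_connected :: "nat \<Rightarrow> (nat \<times> bool) set set \<Rightarrow> bool" where
  "graph_connected m V \<longleftrightarrow> (\<forall>i<m. \<forall>j<m. (i, j) \<in> (edge_adj m V)\<^sup>*)"

definition cycle_graph :: "nat \<Rightarrow> (nat \<Rightarrow> real) \<Rightarrow> (nat \<times> bool) set set \<Rightarrow> bool" where
  "cycle_graph m L V \<longleftrightarrow> metric_graph m L V \<and> graph_connected m V \<and> (\<forall>v\<in>V. vdegree v = 2)"

text \<open>Value f(x_j) and normal derivative \<partial>f(x_j) at an endpoint.\<close>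
definition ep_val :: "(nat \<Rightarrow> real) \<Rightarrow> (nat \<Rightarrow> real \<Rightarrow> real) \<Rightarrow> nat \<times> bool \<Rightarrow> real" where
  "ep_val L f p = (if snd p then f (fst p) (L (fst p)) else f (fst p) 0)"

definition ep_der :: "(nat \<Rightarrow> real) \<Rightarrow> (nat \<Rightarrow> real \<Rightarrow> real) \<Rightarrow> nat \<times> bool \<Rightarrow> real" where
  "ep_der L f' p = (if snd p then - f' (fst p) (L (fst p)) else f' (fst p) 0)"

definition edge_ode :: "nat \<Rightarrow> (nat \<Rightarrow> real) \<Rightarrow> real \<Rightarrow> (nat \<Rightarrow> real \<Rightarrow> real) \<Rightarrow> (nat \<Rightarrow> real \<Rightarrow> real) \<Rightarrow> bool" where
  "edge_ode m L lam f f' \<longleftrightarrow>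
     (\<forall>i<m. \<forall>x\<in>{0..L i}.
        (f i has_real_derivative f' i x) (at x within {0..L i}) \<and>
        (f' i has_real_derivative (- lam * f i x)) (at x within {0..L i}))"

definition st_eigenfunction :: "nat \<Rightarrow> (nat \<Rightarrow> real) \<Rightarrow> (nat \<times> bool) set set \<Rightarrow> real \<Rightarrow> (nat \<Rightarrow> real \<Rightarrow> real) \<Rightarrow> bool" where
  "st_eigenfunction m L V lam f \<longleftrightarrow>
     (\<exists>f'. edge_ode m L lam f f' \<and>
        (\<forall>v\<in>V. \<forall>p\<in>v. \<forall>q\<in>v. ep_val L f p = ep_val L f q) \<and>
        (\<forall>v\<in>V. (\<Sum>p\<in>v. ep_der L f' p) = 0))"

definition dir_eigenfunction :: "nat \<Rightarrow> (nat \<Rightarrow> real) \<Rightarrow> real \<Rightarrow> (nat \<Rightarrow> real \<Rightarrow> real) \<Rightarrow> bool" where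
  "dir_eigenfunction m L lam f \<longleftrightarrow>
     (\<exists>f'. edge_ode m L lam f f' \<and> (\<forall>i<m. f i 0 = 0 \<and> f i (L i) = 0))"

definition lin_indep_on :: "nat \<Rightarrow> (nat \<Rightarrow> real) \<Rightarrow> nat \<Rightarrow> (nat \<Rightarrow> nat \<Rightarrow> real \<Rightarrow> real) \<Rightarrow> bool" where
  "lin_indep_on m L k fs \<longleftrightarrow>
     (\<forall>c :: nat \<Rightarrow> real. (\<forall>i<m. \<forall>x\<in>{0..L i}. (\<Sum>j<k. c j * fs j i x) = 0) \<longrightarrow> (\<forall>j<k. c j = 0))"

text \<open>n-th eigenvalue (1-based, counted with multiplicity): the least t such that there are
  n linearly independent eigenfunctions with eigenvalues \<le> t.\<close>
definition st_eigenvalue :: "nat \<Rightarrow> (nat \<Rightarrow> real) \<Rightarrow> (nat \<times> bool) set set \<Rightarrow> nat \<Rightarrow> real" where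
  "st_eigenvalue m L V n = Inf {t. \<exists>fs \<mu>.
      (\<forall>j<n. \<mu> j \<le> t \<and> st_eigenfunction m L V (\<mu> j) (fs j)) \<and> lin_indep_on m L n fs}"

definition dir_eigenvalue :: "nat \<Rightarrow> (nat \<Rightarrow> real) \<Rightarrow> nat \<Rightarrow> real" where
  "dir_eigenvalue m L n = Inf {t. \<exists>fs \<mu>.
      (\<forall>j<n. \<mu> j \<le> t \<and> dir_eigenfunction m L (\<mu> j) (fs j)) \<and> lin_indep_on m L n fs}"

end

theory Submission
  imports Defs
begin

text \<open>On an edge, a solution of \<open>-f'' = mu f\<close> is determined by its Cauchy data at one end, and
  following an eigenfunction of the standard Laplacian once around the cycle transports these data
  by an explicit factor: multiplication by \<open>cis (sqrt mu * \<Sum>L)\<close> for \<open>mu > 0\<close>, growth and decay by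
  \<open>exp (\<plusminus>sqrt (-mu) * \<Sum>L)\<close> for \<open>mu < 0\<close>, a shear for \<open>mu = 0\<close>. Hence the standard spectrum of a
  cycle of total length \<open>N\<close> is \<open>(2 pi k / N)\<^sup>2\<close>, \<open>k \<ge> 0\<close>, with multiplicity 1 for \<open>k = 0\<close> and at most
  2 otherwise, so for odd \<open>N\<close> the \<open>N + 1\<close>-st eigenvalue is at least \<open>(pi (N + 1) / N)\<^sup>2 > pi\<^sup>2\<close>.
  On the other hand the sines \<open>sin (pi k x / L e)\<close>, \<open>1 \<le> k \<le> L e\<close>, give \<open>N\<close> independent Dirichlet
  eigenfunctions with eigenvalues at most \<open>pi\<^sup>2\<close>.\<close>

section \<open>The eigenvalue equation on an interval\<close>

definition edge_solution :: "real \<Rightarrow> real \<Rightarrow> (real \<Rightarrow> real) \<Rightarrow> (real \<Rightarrow> real) \<Rightarrow> bool" where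
  "edge_solution L mu g g' \<longleftrightarrow>
     (\<forall>x\<in>{0..L}. (g has_real_derivative g' x) (at x within {0..L}) \<and>
                 (g' has_real_derivative (- mu * g x)) (at x within {0..L}))"

lemma edge_ode_iff_edge_solution:
  "edge_ode m L mu f f' \<longleftrightarrow> (\<forall>i<m. edge_solution (L i) mu (f i) (f' i))"
  unfolding edge_ode_def edge_solution_def by blast

lemma constant_on_interval_if_derivative_zero:
  assumes "\<And>x. x \<in> {0..L} \<Longrightarrow> (h has_real_derivative 0) (at x within {0..L::real})"
    and "x \<in> {0..L}"
  shows "h x = h 0"
proof -
  obtain c where "\<forall>x\<in>{0..L}. h x = c"
    using has_field_derivative_zero_constant[of "{0..L}" h] assms(1) by auto
  then show ?thesis using assms(2) by auto
qed

text \<open>For \<open>mu > 0\<close> the Cauchy data, written as \<open>z = g' + \<i> sqrt mu g\<close>, satisfy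
  \<open>z' = \<i> sqrt mu z\<close> and hence rotate.\<close>

lemma edge_solution_pos:
  assumes sol: "edge_solution L mu g g'" and mu: "mu > 0" and x: "x \<in> {0..L}"
  shows "Complex (g' x) (sqrt mu * g x) = Complex (g' 0) (sqrt mu * g 0) * cis (sqrt mu * x)"
proof -
  define w where "w = sqrt mu"
  have mu_eq: "mu = w * w" using mu unfolding w_def by (simp add: real_sqrt_mult_self)
  have D: "(g has_real_derivative g' y) (at y within {0..L})"
          "(g' has_real_derivative (- mu * g y)) (at y within {0..L})" if "y \<in> {0..L}" for y
    using sol that unfolding edge_solution_def by auto
  have "((\<lambda>x. g' x * cos (w * x) + w * g x * sin (w * x)) has_real_derivative 0) (at y within {0..L})"
    if y: "y \<in> {0..L}" for y
    by (rule derivative_eq_intros D[OF y] | simp)+ (simp add: mu_eq algebra_simps)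
  from constant_on_interval_if_derivative_zero[OF this x]
  have re: "g' x * cos (w * x) + w * g x * sin (w * x) = g' 0" by simp
  have "((\<lambda>x. w * g x * cos (w * x) - g' x * sin (w * x)) has_real_derivative 0) (at y within {0..L})"
    if y: "y \<in> {0..L}" for y
    by (rule derivative_eq_intros D[OF y] | simp)+ (simp add: mu_eq algebra_simps)
  from constant_on_interval_if_derivative_zero[OF this x]
  have im: "w * g x * cos (w * x) - g' x * sin (w * x) = w * g 0" by simp
  have "Complex (g' x) (w * g x) * cis (- (w * x)) = Complex (g' 0) (w * g 0)"
    using re im by (simp add: complex_eq_iff algebra_simps)
  then have "Complex (g' x) (w * g x) = Complex (g' 0) (w * g 0) * cis (w * x)"
    by (metis cis_mult cis_zero mult.assoc mult.right_neutral add.left_inverse)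
  then show ?thesis unfolding w_def .
qed

lemma edge_solution_zero:
  assumes sol: "edge_solution L 0 g g'" and x: "x \<in> {0..L}"
  shows "g' x = g' 0" and "g x = g 0 + g' 0 * x"
proof -
  have D: "(g has_real_derivative g' y) (at y within {0..L})"
          "(g' has_real_derivative 0) (at y within {0..L})" if "y \<in> {0..L}" for y
    using sol that unfolding edge_solution_def by auto
  from constant_on_interval_if_derivative_zero[OF D(2) x] show der: "g' x = g' 0" .
  have "((\<lambda>x. g x - g' 0 * x) has_real_derivative 0) (at y within {0..L})" if y: "y \<in> {0..L}" for y
    using constant_on_interval_if_derivative_zero[OF D(2) y]
    by (auto intro!: derivative_eq_intros D(1)[OF y])
  from constant_on_interval_if_derivative_zero[OF this x] show "g x = g 0 + g' 0 * x" by simp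
qed

lemma edge_solution_neg:
  assumes sol: "edge_solution L mu g g'" and mu: "mu < 0" and x: "x \<in> {0..L}"
  defines "k \<equiv> sqrt (- mu)"
  shows "g' x + k * g x = (g' 0 + k * g 0) * exp (k * x)"
    and "g' x - k * g x = (g' 0 - k * g 0) * exp (- (k * x))"
proof -
  have mu_eq: "mu = - (k * k)" using mu unfolding k_def by (simp add: real_sqrt_mult_self)
  have D: "(g has_real_derivative g' y) (at y within {0..L})"
          "(g' has_real_derivative (- mu * g y)) (at y within {0..L})" if "y \<in> {0..L}" for y
    using sol that unfolding edge_solution_def by auto
  have "((\<lambda>x. (g' x + k * g x) * exp (- (k * x))) has_real_derivative 0) (at y within {0..L})"
    if y: "y \<in> {0..L}" for y
    by (rule derivative_eq_intros D[OF y] | simp)+ (simp add: mu_eq algebra_simps)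
  from constant_on_interval_if_derivative_zero[OF this x]
  have "(g' x + k * g x) * exp (- (k * x)) = g' 0 + k * g 0" by simp
  then show "g' x + k * g x = (g' 0 + k * g 0) * exp (k * x)"
    by (metis exp_minus_inverse mult.assoc mult.right_neutral)
  have "((\<lambda>x. (g' x - k * g x) * exp (k * x)) has_real_derivative 0) (at y within {0..L})"
    if y: "y \<in> {0..L}" for y
    by (rule derivative_eq_intros D[OF y] | simp)+ (simp add: mu_eq algebra_simps)
  from constant_on_interval_if_derivative_zero[OF this x]
  have "(g' x - k * g x) * exp (k * x) = g' 0 - k * g 0" by simp
  then show "g' x - k * g x = (g' 0 - k * g 0) * exp (- (k * x))"
    by (metis exp_minus_inverse mult.assoc mult.commute mult.right_neutral)
qed

lemma edge_solution_vanishes: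
  assumes sol: "edge_solution L mu g g'" and x: "x \<in> {0..L}" and y: "y \<in> {0..L}"
    and gx: "g x = 0" and g'x: "g' x = 0"
  shows "g y = 0"
proof -
  consider "mu > 0" | "mu = 0" | "mu < 0" by linarith
  then show ?thesis
  proof cases
    case 1
    have "Complex (g' x) (sqrt mu * g x) = 0" using gx g'x by (simp add: complex_eq_iff)
    then have "Complex (g' 0) (sqrt mu * g 0) = 0" using edge_solution_pos[OF sol 1 x] by simp
    then have "Complex (g' y) (sqrt mu * g y) = 0" using edge_solution_pos[OF sol 1 y] by simp
    then show ?thesis using 1 by (simp add: complex_eq_iff)
  next
    case 2
    with sol have sol0: "edge_solution L 0 g g'" by simp
    show ?thesis using edge_solution_zero[OF sol0 x] edge_solution_zero[OF sol0 y] gx g'x by simp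
  next
    case 3
    define k where "k = sqrt (- mu)"
    have "g' 0 + k * g 0 = 0" "g' 0 - k * g 0 = 0"
      using edge_solution_neg[OF sol 3 x] gx g'x unfolding k_def by simp_all
    then have "g' y + k * g y = 0" "g' y - k * g y = 0"
      using edge_solution_neg(1)[OF sol 3 y] edge_solution_neg(2)[OF sol 3 y]
      unfolding k_def by (simp_all only: mult_zero_left)
    then have "k * g y = 0" by linarith
    then show ?thesis using 3 unfolding k_def by simp
  qed
qed

lemma prod_cis: "(\<Prod>i<(n::nat). cis (a i)) = cis (\<Sum>i<n. a i)"
  by (induction n) (simp_all add: cis_mult)

lemma zero_if_abs_scaled_along_permutation:
  fixes u c :: "'a \<Rightarrow> real"
  assumes A: "finite A" "bij_betw r A A"
    and scaled: "\<And>q. q \<in> A \<Longrightarrow> \<bar>u (r q)\<bar> = \<bar>u q\<bar> * c q"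
    and c: "(\<forall>q\<in>A. 1 < c q) \<or> (\<forall>q\<in>A. c q < 1)"
    and q: "q \<in> A"
  shows "u q = 0"
proof -
  have "(\<Sum>q\<in>A. \<bar>u (r q)\<bar>) = (\<Sum>q\<in>A. \<bar>u q\<bar>)"
    using sum.reindex_bij_betw[OF A(2), of "\<lambda>q. \<bar>u q\<bar>"] by simp
  then have sum_zero: "(\<Sum>q\<in>A. \<bar>u q\<bar> * (c q - 1)) = 0"
    using scaled by (simp add: algebra_simps sum_subtractf)
  from c show ?thesis
  proof
    assume c: "\<forall>q\<in>A. 1 < c q"
    have "\<forall>q\<in>A. \<bar>u q\<bar> * (c q - 1) = 0"
      using sum_zero c by (subst sum_nonneg_eq_0_iff[OF A(1), symmetric]) auto
    then show ?thesis using c q by force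
  next
    assume c: "\<forall>q\<in>A. c q < 1"
    have "(\<Sum>q\<in>A. \<bar>u q\<bar> * (1 - c q)) = 0"
      using sum_zero by (simp add: algebra_simps sum_subtractf)
    then have "\<forall>q\<in>A. \<bar>u q\<bar> * (1 - c q) = 0"
      using c by (subst sum_nonneg_eq_0_iff[OF A(1), symmetric]) auto
    then show ?thesis using c q by force
  qed
qed

lemma lin_indep_on_sum_subset:
  assumes indep: "lin_indep_on m L n fs" and S: "S \<subseteq> {..<n}"
    and zero: "\<And>i x. i < m \<Longrightarrow> x \<in> {0..L i} \<Longrightarrow> (\<Sum>j\<in>S. c j * fs j i x) = 0"
    and j: "j \<in> S"
  shows "c j = 0"
proof -
  define c' where "c' j = (if j \<in> S then c j else 0)" for j
  have "(\<Sum>j<n. c' j * fs j i x) = (\<Sum>j\<in>S. c j * fs j i x)" for i x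
  proof -
    have "(\<Sum>j<n. c' j * fs j i x) = (\<Sum>j\<in>{..<n}. if j \<in> S then c j * fs j i x else 0)"
      unfolding c'_def by (intro sum.cong) auto
    also have "\<dots> = (\<Sum>j\<in>{..<n} \<inter> S. c j * fs j i x)"
      by (simp add: sum.inter_restrict)
    also have "{..<n} \<inter> S = S" using S by blast
    finally show ?thesis .
  qed
  then have "\<forall>j<n. c' j = 0" using indep zero unfolding lin_indep_on_def by simp
  then show ?thesis using j S unfolding c'_def by auto
qed

lemma lin_indep_on_nonzero:
  assumes "lin_indep_on m L n fs" and "j < n"
  shows "\<exists>i<m. \<exists>x\<in>{0..L i}. fs j i x \<noteq> 0"
proof (rule ccontr)
  assume "\<not> ?thesis"
  then have "(\<lambda>_. 1::real) j = 0"
    using lin_indep_on_sum_subset[OF assms(1), of "{j}" "\<lambda>_. 1"] assms(2) by auto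
  then show False by simp
qed

lemma two_linear_forms_common_nontrivial_zero:
  fixes x1 x2 x3 y1 y2 y3 :: real
  shows "\<exists>a b c. (a \<noteq> 0 \<or> b \<noteq> 0 \<or> c \<noteq> 0) \<and> a*x1 + b*x2 + c*x3 = 0 \<and> a*y1 + b*y2 + c*y3 = 0"
proof (cases "x2*y3 - y2*x3 \<noteq> 0 \<or> x3*y1 - y3*x1 \<noteq> 0 \<or> x1*y2 - y1*x2 \<noteq> 0")
  case True
  moreover have "(x2*y3 - y2*x3)*x1 + (x3*y1 - y3*x1)*x2 + (x1*y2 - y1*x2)*x3 = 0"
    and "(x2*y3 - y2*x3)*y1 + (x3*y1 - y3*x1)*y2 + (x1*y2 - y1*x2)*y3 = 0"
    by algebra+
  ultimately show ?thesis by blast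
next
  case False
  show ?thesis
  proof (cases "x1 = 0 \<and> y1 = 0")
    case True
    then show ?thesis by (intro exI[of _ 1] exI[of _ 0]) simp
  next
    case nonzero: False
    have "x1^2 + y1^2 \<noteq> 0" using nonzero by (simp add: add_nonneg_eq_0_iff)
    then have "x2 = ((x1*x2 + y1*y2) / (x1^2 + y1^2)) * x1" "y2 = ((x1*x2 + y1*y2) / (x1^2 + y1^2)) * y1"
      using False by (simp_all add: field_simps power2_eq_square; algebra)+
    then show ?thesis
      by (intro exI[of _ "(x1*x2 + y1*y2) / (x1^2 + y1^2)"] exI[of _ "-1"] exI[of _ 0]) simp
  qed
qed

section \<open>Walking around a cycle graph\<close>

definition opposite :: "nat \<times> bool \<Rightarrow> nat \<times> bool" where
  "opposite p = (fst p, \<not> snd p)"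

lemma opposite_opposite [simp]: "opposite (opposite p) = p"
  unfolding opposite_def by simp

lemma opposite_neq: "opposite p \<noteq> p"
  unfolding opposite_def by (cases p) auto

lemma fst_opposite [simp]: "fst (opposite p) = fst p"
  unfolding opposite_def by simp

locale cycle =
  fixes m :: nat and L :: "nat \<Rightarrow> real" and V :: "(nat \<times> bool) set set"
  assumes cycle_graph: "cycle_graph m L V" and edges_nonempty: "0 < m"
begin

definition endpoints :: "(nat \<times> bool) set" where
  "endpoints = {..<m} \<times> UNIV"

definition vertex_at :: "nat \<times> bool \<Rightarrow> (nat \<times> bool) set" where
  "vertex_at p = (THE v. v \<in> V \<and> p \<in> v)"

definition partner :: "nat \<times> bool \<Rightarrow> nat \<times> bool" where
  "partner p = (THE q. q \<in> vertex_at p \<and> q \<noteq> p)"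

text \<open>A walk entering edge \<open>fst p\<close> at \<open>p\<close> runs along it and through its far vertex, entering
  the next edge at \<open>step p\<close>.\<close>

definition step :: "nat \<times> bool \<Rightarrow> nat \<times> bool" where
  "step p = partner (opposite p)"

definition start :: "nat \<times> bool" where
  "start = (0, False)"

definition walk :: "(nat \<times> bool) set" where
  "walk = range (\<lambda>n. (step ^^ n) start)"

lemma is_metric_graph: "metric_graph m L V"
  using cycle_graph unfolding cycle_graph_def by simp

lemma edge_length_pos: "i < m \<Longrightarrow> L i > 0"
  using is_metric_graph unfolding metric_graph_def by simp

lemma Union_vertices: "\<Union>V = endpoints"
  using is_metric_graph unfolding metric_graph_def endpoints_def by simp

lemma vertices_disjoint: "v \<in> V \<Longrightarrow> w \<in> V \<Longrightarrow> v \<noteq> w \<Longrightarrow> v \<inter> w = {}"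
  using is_metric_graph unfolding metric_graph_def by simp

lemma card_vertex: "v \<in> V \<Longrightarrow> card v = 2"
  using cycle_graph unfolding cycle_graph_def vdegree_def by simp

lemma finite_endpoints: "finite endpoints"
  unfolding endpoints_def by simp

lemma endpoint_cases:
  assumes "p \<in> endpoints"
  obtains i where "i < m" "p = (i, False)" | i where "i < m" "p = (i, True)"
  using assms unfolding endpoints_def by (cases p) (metis (full_types) lessThan_iff mem_Sigma_iff)

lemma opposite_endpoint: "p \<in> endpoints \<Longrightarrow> opposite p \<in> endpoints"
  unfolding opposite_def endpoints_def by auto

lemma vertex_at_eq: "v \<in> V \<Longrightarrow> p \<in> v \<Longrightarrow> vertex_at p = v"
  unfolding vertex_at_def by (rule the_equality) (use vertices_disjoint in auto)

lemma vertex_at: "p \<in> endpoints \<Longrightarrow> vertex_at p \<in> V \<and> p \<in> vertex_at p"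
  using Union_vertices vertex_at_eq by blast

lemma vertex_at_partner: "p \<in> endpoints \<Longrightarrow> vertex_at p = {p, partner p} \<and> partner p \<noteq> p"
proof -
  assume p: "p \<in> endpoints"
  then have "card (vertex_at p) = 2" "p \<in> vertex_at p" using vertex_at card_vertex by auto
  then obtain q where q: "vertex_at p = {p, q}" "q \<noteq> p"
    by (metis card_2_iff insert_commute insertE singletonD)
  then have "partner p = q" unfolding partner_def by (rule_tac the_equality) auto
  with q show ?thesis by simp
qed

lemma partner_endpoint: "p \<in> endpoints \<Longrightarrow> partner p \<in> endpoints"
  using vertex_at_partner vertex_at Union_vertices by blast

lemma partner_partner: "p \<in> endpoints \<Longrightarrow> partner (partner p) = p"
proof -
  assume p: "p \<in> endpoints"
  have "vertex_at (partner p) = vertex_at p"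
    using vertex_at[OF p] vertex_at_partner[OF p] vertex_at_eq by auto
  then have "{partner p, partner (partner p)} = {p, partner p}"
    using vertex_at_partner[OF p] vertex_at_partner[OF partner_endpoint[OF p]] by auto
  then show ?thesis using vertex_at_partner[OF partner_endpoint[OF p]] by (metis doubleton_eq_iff)
qed

lemma step_endpoint: "p \<in> endpoints \<Longrightarrow> step p \<in> endpoints"
  unfolding step_def using partner_endpoint opposite_endpoint by blast

lemma inj_on_step: "inj_on step endpoints"
  unfolding inj_on_def step_def by (metis partner_partner opposite_endpoint opposite_opposite)

lemma funpow_step_endpoint: "p \<in> endpoints \<Longrightarrow> (step ^^ n) p \<in> endpoints"
  by (induction n) (auto simp: step_endpoint)

lemma funpow_step_inj:
  "p \<in> endpoints \<Longrightarrow> q \<in> endpoints \<Longrightarrow> (step ^^ n) p = (step ^^ n) q \<Longrightarrow> p = q"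
  by (induction n) (auto dest: inj_onD[OF inj_on_step] simp: funpow_step_endpoint)

lemma step_opposite_step: "p \<in> endpoints \<Longrightarrow> step (opposite (step p)) = opposite p"
  unfolding step_def using partner_partner opposite_endpoint by simp

lemma funpow_step_opposite:
  "p \<in> endpoints \<Longrightarrow> (step ^^ n) (opposite ((step ^^ n) p)) = opposite p"
proof (induction n)
  case (Suc n)
  have unfold: "(step ^^ Suc n) x = (step ^^ n) (step x)" for x
    by (simp add: funpow_Suc_right del: funpow.simps)
  have "(step ^^ Suc n) (opposite ((step ^^ Suc n) p))
      = (step ^^ n) (step (opposite (step ((step ^^ n) p))))"
    by (simp only: unfold[of "opposite ((step ^^ Suc n) p)"]) simp
  also have "\<dots> = (step ^^ n) (opposite ((step ^^ n) p))"
    using step_opposite_step funpow_step_endpoint Suc by simp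
  finally show ?case using Suc by simp
qed simp

lemma start_endpoint: "start \<in> endpoints"
  unfolding start_def endpoints_def using edges_nonempty by simp

lemma walk_subset: "walk \<subseteq> endpoints"
  unfolding walk_def using funpow_step_endpoint[OF start_endpoint] by blast

lemma finite_walk: "finite walk"
  using walk_subset finite_endpoints finite_subset by blast

lemma start_in_walk: "start \<in> walk"
  unfolding walk_def by (rule range_eqI[of _ _ 0]) simp

lemma step_in_walk: "p \<in> walk \<Longrightarrow> step p \<in> walk"
  unfolding walk_def by (auto intro: range_eqI[of _ _ "Suc _"])

lemma walk_funpow: "q \<in> walk \<Longrightarrow> \<exists>n. q = (step ^^ n) start"
  unfolding walk_def by blast

lemma bij_betw_step_walk: "bij_betw step walk walk"
proof -
  have "inj_on step walk" using inj_on_step walk_subset inj_on_subset by blast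
  moreover have "step ` walk \<subseteq> walk" using step_in_walk by blast
  ultimately show ?thesis
    unfolding bij_betw_def using endo_inj_surj[OF finite_walk] by blast
qed

lemma partner_walk: "q \<in> walk \<Longrightarrow> partner q \<in> opposite ` walk"
proof -
  assume "q \<in> walk"
  then obtain r where r: "r \<in> walk" "q = step r"
    using bij_betw_step_walk unfolding bij_betw_def by (metis imageE)
  have "r \<in> endpoints" using r walk_subset by blast
  then have "partner q = opposite r"
    using r partner_partner[OF opposite_endpoint] unfolding step_def by simp
  then show ?thesis using r by auto
qed

lemma partner_opposite_walk: "q \<in> opposite ` walk \<Longrightarrow> partner q \<in> walk"
  using step_in_walk unfolding step_def by auto

text \<open>Connectedness: the endpoints reached by the walk, together with their opposites, are closed
  under both \<open>opposite\<close> and \<open>partner\<close>, hence contain an endpoint of every edge.\<close>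

lemma endpoints_eq_walk_Un: "endpoints = walk \<union> opposite ` walk"
proof -
  define C where "C = walk \<union> opposite ` walk"
  have opposite_C: "p \<in> C \<Longrightarrow> opposite p \<in> C" for p unfolding C_def by (auto simp: image_iff)
  have partner_C: "p \<in> C \<Longrightarrow> partner p \<in> C" for p
    unfolding C_def using partner_walk partner_opposite_walk by blast
  have edge_C: "(i, b) \<in> C \<Longrightarrow> (i, c) \<in> C" for i b c
    using opposite_C[of "(i, b)"] by (cases "b = c") (auto simp: opposite_def)
  have "(i, False) \<in> C" if "(0, i) \<in> (edge_adj m V)\<^sup>*" for i
    using that
  proof (induction rule: rtrancl_induct)
    case base
    then show ?case using start_in_walk unfolding C_def start_def by auto
  next
    case (step j k)
    then obtain v a b where v: "v \<in> V" "(j, a) \<in> v" "(k, b) \<in> v" unfolding edge_adj_def by auto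
    have "(j, a) \<in> C" using edge_C step by blast
    moreover have "(k, b) = (j, a) \<or> (k, b) = partner (j, a)"
      using vertex_at_eq[OF v(1,2)] vertex_at_partner[of "(j, a)"] v Union_vertices by blast
    ultimately show ?case using edge_C partner_C by metis
  qed
  moreover have "(0, i) \<in> (edge_adj m V)\<^sup>*" if "i < m" for i
    using cycle_graph edges_nonempty that unfolding cycle_graph_def graph_connected_def by auto
  ultimately have "(i, b) \<in> C" if "i < m" for i b using edge_C that by blast
  then have "endpoints \<subseteq> C" unfolding endpoints_def by auto
  moreover have "C \<subseteq> endpoints" unfolding C_def using walk_subset opposite_endpoint by auto
  ultimately show ?thesis unfolding C_def by auto
qed

text \<open>If the walk reached an endpoint of the opposite orientation after \<open>c\<close> steps, reflecting the
  walk about its midpoint would produce an endpoint fixed by \<open>opposite\<close> (\<open>c\<close> even) or by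
  \<open>partner\<close> (\<open>c\<close> odd).\<close>

lemma walk_opposite_disjoint: "walk \<inter> opposite ` walk = {}"
proof (rule ccontr)
  assume "walk \<inter> opposite ` walk \<noteq> {}"
  then obtain a b where ab: "(step ^^ a) start = opposite ((step ^^ b) start)"
    unfolding walk_def by blast
  define c where "c = a + b"
  have "(step ^^ b) ((step ^^ a) start) = opposite start"
    using ab funpow_step_opposite start_endpoint by simp
  moreover have "(step ^^ b) ((step ^^ a) start) = (step ^^ c) start"
    unfolding c_def by (subst add.commute) (simp add: funpow_add)
  ultimately have opposite_start: "opposite start = (step ^^ c) start" by simp
  have reflect: "opposite ((step ^^ n) start) = (step ^^ (c - n)) start" if "n \<le> c" for n
  proof -
    have "(step ^^ n) (opposite ((step ^^ n) start)) = (step ^^ n) ((step ^^ (c - n)) start)"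
      using funpow_step_opposite[OF start_endpoint, of n] opposite_start that
      by (metis funpow_add le_add_diff_inverse comp_apply)
    then show ?thesis
      using funpow_step_inj funpow_step_endpoint opposite_endpoint start_endpoint by metis
  qed
  show False
  proof (cases "even c")
    case True
    then obtain n where "c = 2 * n" by blast
    then show False using reflect[of n] opposite_neq by simp
  next
    case False
    then obtain n where n: "c = 2 * n + 1" using oddE by blast
    have "partner ((step ^^ Suc n) start) = opposite ((step ^^ n) start)"
      using partner_partner opposite_endpoint funpow_step_endpoint start_endpoint
      unfolding step_def by simp
    also have "\<dots> = (step ^^ Suc n) start" using reflect[of n] n by simp
    finally show False using vertex_at_partner funpow_step_endpoint start_endpoint by metis
  qed
qed

lemma bij_betw_fst_walk: "bij_betw fst walk {..<m}"
proof -
  have "inj_on fst walk"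
  proof (rule inj_onI)
    fix p q assume pq: "p \<in> walk" "q \<in> walk" "fst p = fst q"
    show "p = q"
    proof (rule ccontr)
      assume "p \<noteq> q"
      then have "q = opposite p" using pq unfolding opposite_def by (cases p, cases q) auto
      then show False using walk_opposite_disjoint pq by auto
    qed
  qed
  moreover have "fst ` walk = {..<m}"
  proof -
    have "fst ` (walk \<union> opposite ` walk) = fst ` walk" by (simp add: image_Un image_image)
    then show ?thesis
      using endpoints_eq_walk_Un unfolding endpoints_def by (metis fst_image_times UNIV_not_empty)
  qed
  ultimately show ?thesis unfolding bij_betw_def by simp
qed

lemma sum_walk: "(\<Sum>p\<in>walk. h (fst p)) = (\<Sum>i<m. h i)"
  using sum.reindex_bij_betw[OF bij_betw_fst_walk] by simp

lemma prod_walk: "(\<Prod>p\<in>walk. h (fst p)) = (\<Prod>i<m. h i)"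
  using prod.reindex_bij_betw[OF bij_betw_fst_walk] by simp

lemma edge_in_walk: "i < m \<Longrightarrow> \<exists>b. (i, b) \<in> walk"
  using bij_betw_fst_walk unfolding bij_betw_def by (metis fst_conv imageE lessThan_iff prod.collapse)

section \<open>Standard eigenfunctions on a cycle\<close>

definition st_eigenpair :: "real \<Rightarrow> (nat \<Rightarrow> real \<Rightarrow> real) \<Rightarrow> (nat \<Rightarrow> real \<Rightarrow> real) \<Rightarrow> bool" where
  "st_eigenpair mu f f' \<longleftrightarrow> edge_ode m L mu f f' \<and>
     (\<forall>v\<in>V. \<forall>p\<in>v. \<forall>q\<in>v. ep_val L f p = ep_val L f q) \<and>
     (\<forall>v\<in>V. (\<Sum>p\<in>v. ep_der L f' p) = 0)"

lemma st_eigenfunction_iff: "st_eigenfunction m L V mu f \<longleftrightarrow> (\<exists>f'. st_eigenpair mu f f')"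
  unfolding st_eigenfunction_def st_eigenpair_def by simp

lemma st_eigenpair_edge_solution:
  "st_eigenpair mu f f' \<Longrightarrow> i < m \<Longrightarrow> edge_solution (L i) mu (f i) (f' i)"
  unfolding st_eigenpair_def edge_ode_iff_edge_solution by simp

lemma st_eigenpair_lincomb:
  assumes "st_eigenpair mu f f'" and "st_eigenpair mu g g'"
  shows "st_eigenpair mu (\<lambda>i x. a * f i x + b * g i x) (\<lambda>i x. a * f' i x + b * g' i x)"
proof -
  have "edge_ode m L mu (\<lambda>i x. a * f i x + b * g i x) (\<lambda>i x. a * f' i x + b * g' i x)"
    unfolding edge_ode_def
  proof (intro allI impI ballI conjI)
    fix i x assume i: "i < m" and x: "x \<in> {0..L i}"
    have D: "(f i has_real_derivative f' i x) (at x within {0..L i})"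
            "(g i has_real_derivative g' i x) (at x within {0..L i})"
            "(f' i has_real_derivative (- mu * f i x)) (at x within {0..L i})"
            "(g' i has_real_derivative (- mu * g i x)) (at x within {0..L i})"
      using st_eigenpair_edge_solution[OF assms(1) i] st_eigenpair_edge_solution[OF assms(2) i] x
      unfolding edge_solution_def by auto
    show "((\<lambda>x. a * f i x + b * g i x) has_real_derivative a * f' i x + b * g' i x) (at x within {0..L i})"
      by (auto intro!: derivative_eq_intros D)
    show "((\<lambda>x. a * f' i x + b * g' i x) has_real_derivative - mu * (a * f i x + b * g i x)) (at x within {0..L i})"
      by (rule derivative_eq_intros D | simp)+ (simp add: algebra_simps)
  qed
  moreover have val: "ep_val L (\<lambda>i x. a * f i x + b * g i x) p = a * ep_val L f p + b * ep_val L g p"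
    and der: "ep_der L (\<lambda>i x. a * f' i x + b * g' i x) p = a * ep_der L f' p + b * ep_der L g' p" for p
    unfolding ep_val_def ep_der_def by simp_all
  moreover have "ep_val L (\<lambda>i x. a * f i x + b * g i x) p = ep_val L (\<lambda>i x. a * f i x + b * g i x) q"
    if "v \<in> V" "p \<in> v" "q \<in> v" for v p q
    using assms that unfolding val st_eigenpair_def by metis
  moreover have "(\<Sum>p\<in>v. ep_der L (\<lambda>i x. a * f' i x + b * g' i x) p) = 0" if "v \<in> V" for v
  proof -
    have "(\<Sum>p\<in>v. ep_der L (\<lambda>i x. a * f' i x + b * g' i x) p)
        = a * (\<Sum>p\<in>v. ep_der L f' p) + b * (\<Sum>p\<in>v. ep_der L g' p)"
      unfolding der by (simp add: sum.distrib sum_distrib_left)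
    also have "\<dots> = 0" using assms that unfolding st_eigenpair_def by simp
    finally show ?thesis .
  qed
  ultimately show ?thesis unfolding st_eigenpair_def by blast
qed

lemma partner_val:
  "st_eigenpair mu f f' \<Longrightarrow> p \<in> endpoints \<Longrightarrow> ep_val L f (partner p) = ep_val L f p"
  unfolding st_eigenpair_def using vertex_at[of p] vertex_at_partner[of p] by auto

lemma partner_der:
  "st_eigenpair mu f f' \<Longrightarrow> p \<in> endpoints \<Longrightarrow> ep_der L f' (partner p) = - ep_der L f' p"
  unfolding st_eigenpair_def using vertex_at[of p] vertex_at_partner[of p] by fastforce

lemma step_val:
  assumes "st_eigenpair mu f f'" and "p \<in> endpoints"
  shows "ep_val L f (step p) = ep_val L f (opposite p)"
  unfolding step_def using partner_val[OF assms(1) opposite_endpoint[OF assms(2)]] .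

lemma step_der:
  assumes "st_eigenpair mu f f'" and "p \<in> endpoints"
  shows "ep_der L f' (step p) = - ep_der L f' (opposite p)"
  unfolding step_def using partner_der[OF assms(1) opposite_endpoint[OF assms(2)]] .

lemma st_eigenpair_vanishes_if_walk_data_vanish:
  assumes st: "st_eigenpair mu f f'"
    and walk_zero: "\<And>q. q \<in> walk \<Longrightarrow> ep_val L f q = 0 \<and> ep_der L f' q = 0"
    and i: "i < m" and x: "x \<in> {0..L i}"
  shows "f i x = 0"
proof -
  obtain b where b: "(i, b) \<in> walk" using edge_in_walk[OF i] by blast
  define y where "y = (if b then L i else 0)"
  have "y \<in> {0..L i}" unfolding y_def using edge_length_pos[OF i] by simp
  moreover have "f i y = 0" "f' i y = 0"
    using walk_zero[OF b] unfolding y_def ep_val_def ep_der_def by (cases b; simp)+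
  ultimately show ?thesis
    using edge_solution_vanishes[OF st_eigenpair_edge_solution[OF st i] _ x] by blast
qed

definition cauchy_data :: "real \<Rightarrow> (nat \<Rightarrow> real \<Rightarrow> real) \<Rightarrow> (nat \<Rightarrow> real \<Rightarrow> real) \<Rightarrow> nat \<times> bool \<Rightarrow> complex" where
  "cauchy_data mu f f' p = Complex (ep_der L f' p) (sqrt mu * ep_val L f p)"

lemma cauchy_data_step:
  assumes st: "st_eigenpair mu f f'" and mu: "mu > 0" and p: "p \<in> endpoints"
  shows "cauchy_data mu f f' (step p) = cauchy_data mu f f' p * cis (sqrt mu * L (fst p))"
  using p
proof (cases rule: endpoint_cases)
  case (1 i)
  have "L i \<in> {0..L i}" using edge_length_pos[OF 1(1)] by simp
  from edge_solution_pos[OF st_eigenpair_edge_solution[OF st 1(1)] mu this] show ?thesis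
    using step_val[OF st p] step_der[OF st p] 1(2)
    by (simp add: cauchy_data_def ep_val_def ep_der_def opposite_def)
next
  case (2 i)
  define t where "t = sqrt mu * L i"
  have "L i \<in> {0..L i}" using edge_length_pos[OF 2(1)] by simp
  from edge_solution_pos[OF st_eigenpair_edge_solution[OF st 2(1)] mu this]
  have "cnj (Complex (f' i (L i)) (sqrt mu * f i (L i))) = cnj (Complex (f' i 0) (sqrt mu * f i 0)) * cis (- t)"
    unfolding t_def by (simp add: cis_cnj)
  then have "cnj (Complex (f' i (L i)) (sqrt mu * f i (L i))) * cis t = cnj (Complex (f' i 0) (sqrt mu * f i 0))"
    by (simp add: mult.assoc cis_mult)
  then have "- cnj (Complex (f' i (L i)) (sqrt mu * f i (L i))) * cis t = - cnj (Complex (f' i 0) (sqrt mu * f i 0))"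
    by (metis minus_mult_left)
  moreover have "- cnj (Complex a b) = Complex (- a) b" for a b by (simp add: complex_eq_iff)
  ultimately have "Complex (- f' i (L i)) (sqrt mu * f i (L i)) * cis t = Complex (- f' i 0) (sqrt mu * f i 0)"
    by simp
  then show ?thesis
    using step_val[OF st p] step_der[OF st p] 2(2)
    by (simp add: cauchy_data_def ep_val_def ep_der_def opposite_def t_def)
qed

lemma norm_cauchy_data_walk:
  assumes st: "st_eigenpair mu f f'" and mu: "mu > 0" and q: "q \<in> walk"
  shows "norm (cauchy_data mu f f' q) = norm (cauchy_data mu f f' start)"
proof -
  have "norm (cauchy_data mu f f' ((step ^^ n) start)) = norm (cauchy_data mu f f' start)" for n
    by (induction n)
       (simp_all add: cauchy_data_step[OF st mu funpow_step_endpoint[OF start_endpoint]] norm_mult)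
  then show ?thesis using walk_funpow[OF q] by auto
qed

lemma st_eigenpair_pos_vanishes:
  assumes st: "st_eigenpair mu f f'" and mu: "mu > 0" and start_zero: "f 0 0 = 0" "f' 0 0 = 0"
    and i: "i < m" and x: "x \<in> {0..L i}"
  shows "f i x = 0"
proof (rule st_eigenpair_vanishes_if_walk_data_vanish[OF st _ i x])
  fix q assume q: "q \<in> walk"
  have "cauchy_data mu f f' start = 0"
    using start_zero unfolding cauchy_data_def start_def ep_val_def ep_der_def by (simp add: complex_eq_iff)
  then have "cauchy_data mu f f' q = 0" using norm_cauchy_data_walk[OF st mu q] by simp
  then show "ep_val L f q = 0 \<and> ep_der L f' q = 0"
    using mu unfolding cauchy_data_def by (simp add: complex_eq_iff)
qed

text \<open>Going once around the cycle multiplies the (nonzero) Cauchy data by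
  \<open>cis (sqrt mu * (\<Sum>i<m. L i))\<close>.\<close>

lemma st_eigenpair_pos_quantized:
  assumes st: "st_eigenpair mu f f'" and mu: "mu > 0" and nonzero: "\<exists>i<m. \<exists>x\<in>{0..L i}. f i x \<noteq> 0"
  shows "\<exists>n::int. sqrt mu * (\<Sum>i<m. L i) = 2 * pi * n"
proof -
  have "cauchy_data mu f f' start \<noteq> 0"
  proof
    assume "cauchy_data mu f f' start = 0"
    then have "f 0 0 = 0" "f' 0 0 = 0"
      using mu unfolding cauchy_data_def start_def ep_val_def ep_der_def by (simp_all add: complex_eq_iff)
    then show False using nonzero st_eigenpair_pos_vanishes[OF st mu] by blast
  qed
  then have nonzero_walk: "cauchy_data mu f f' q \<noteq> 0" if "q \<in> walk" for q
    using norm_cauchy_data_walk[OF st mu that] by auto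
  define P where "P = (\<Prod>q\<in>walk. cauchy_data mu f f' q)"
  have "P \<noteq> 0" unfolding P_def using nonzero_walk finite_walk by simp
  have "P = (\<Prod>q\<in>walk. cauchy_data mu f f' (step q))"
    unfolding P_def using prod.reindex_bij_betw[OF bij_betw_step_walk, of "cauchy_data mu f f'"] by simp
  also have "\<dots> = (\<Prod>q\<in>walk. cauchy_data mu f f' q * cis (sqrt mu * L (fst q)))"
    using cauchy_data_step[OF st mu] walk_subset by (intro prod.cong) auto
  also have "\<dots> = P * (\<Prod>i<m. cis (sqrt mu * L i))"
    unfolding P_def prod.distrib prod_walk[of "\<lambda>i. cis (sqrt mu * L i)"] ..
  also have "\<dots> = P * cis (sqrt mu * (\<Sum>i<m. L i))"
    by (simp add: prod_cis sum_distrib_left)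
  finally have "cis (sqrt mu * (\<Sum>i<m. L i)) = 1"
    using \<open>P \<noteq> 0\<close> by (metis mult_cancel_left1)
  then have "cos (sqrt mu * (\<Sum>i<m. L i)) = 1"
    by (simp add: complex_eq_iff)
  then obtain n :: int where "sqrt mu * (\<Sum>i<m. L i) = real_of_int n * 2 * pi"
    using cos_one_2pi_int by blast
  then show ?thesis by (auto simp: algebra_simps)
qed

lemma neg_data_step:
  assumes st: "st_eigenpair mu f f'" and mu: "mu < 0" and p: "p \<in> endpoints"
  defines "k \<equiv> sqrt (- mu)"
  shows "ep_der L f' (step p) + k * ep_val L f (step p)
           = (ep_der L f' p + k * ep_val L f p) * exp (k * L (fst p))"
    and "ep_der L f' (step p) - k * ep_val L f (step p)
           = (ep_der L f' p - k * ep_val L f p) * exp (- (k * L (fst p)))"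
proof -
  have inv: "exp (- (k * L i)) * exp (k * L i) = 1" for i by (simp add: exp_minus)
  have "(ep_der L f' (step p) + k * ep_val L f (step p)
           = (ep_der L f' p + k * ep_val L f p) * exp (k * L (fst p)))
      \<and> (ep_der L f' (step p) - k * ep_val L f (step p)
           = (ep_der L f' p - k * ep_val L f p) * exp (- (k * L (fst p))))"
    using p
  proof (cases rule: endpoint_cases)
    case (1 i)
    have "L i \<in> {0..L i}" using edge_length_pos[OF 1(1)] by simp
    from edge_solution_neg[OF st_eigenpair_edge_solution[OF st 1(1)] mu this] show ?thesis
      using step_val[OF st p] step_der[OF st p] 1(2)
      by (simp add: ep_val_def ep_der_def opposite_def k_def)
  next
    case (2 i)
    have "L i \<in> {0..L i}" using edge_length_pos[OF 2(1)] by simp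
    note sol = edge_solution_neg[OF st_eigenpair_edge_solution[OF st 2(1)] mu this, folded k_def]
    have "- f' i 0 + k * f i 0 = (- f' i (L i) + k * f i (L i)) * exp (k * L i)"
      using arg_cong[OF sol(2), of "\<lambda>y. - y * exp (k * L i)"] inv by (simp add: algebra_simps)
    moreover have "- f' i 0 - k * f i 0 = (- f' i (L i) - k * f i (L i)) * exp (- (k * L i))"
      using arg_cong[OF sol(1), of "\<lambda>y. - y * exp (- (k * L i))"] inv by (simp add: algebra_simps)
    ultimately show ?thesis
      using step_val[OF st p] step_der[OF st p] 2(2) by (simp add: ep_val_def ep_der_def opposite_def)
  qed
  then show "ep_der L f' (step p) + k * ep_val L f (step p)
               = (ep_der L f' p + k * ep_val L f p) * exp (k * L (fst p))"
    and "ep_der L f' (step p) - k * ep_val L f (step p)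
               = (ep_der L f' p - k * ep_val L f p) * exp (- (k * L (fst p)))"
    by auto
qed

text \<open>For \<open>mu < 0\<close> the two combinations \<open>f' \<plusminus> k f\<close> of the Cauchy data strictly grow
  resp. decay along every edge, which is impossible around a closed walk unless they vanish.\<close>

lemma st_eigenpair_neg_vanishes:
  assumes st: "st_eigenpair mu f f'" and mu: "mu < 0" and i: "i < m" and x: "x \<in> {0..L i}"
  shows "f i x = 0"
proof (rule st_eigenpair_vanishes_if_walk_data_vanish[OF st _ i x])
  fix q assume q: "q \<in> walk"
  define k where "k = sqrt (- mu)"
  have kL: "k * L (fst q) > 0" if "q \<in> walk" for q
    using that walk_subset edge_length_pos mu unfolding k_def endpoints_def by auto
  have "ep_der L f' q + k * ep_val L f q = 0"
    by (rule zero_if_abs_scaled_along_permutation[OF finite_walk bij_betw_step_walk _ _ q,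
          where c = "\<lambda>q. exp (k * L (fst q))"])
       (use neg_data_step(1)[OF st mu, folded k_def] walk_subset kL in \<open>auto simp: abs_mult\<close>)
  moreover have "ep_der L f' q - k * ep_val L f q = 0"
    by (rule zero_if_abs_scaled_along_permutation[OF finite_walk bij_betw_step_walk _ _ q,
          where c = "\<lambda>q. exp (- (k * L (fst q)))"])
       (use neg_data_step(2)[OF st mu, folded k_def] walk_subset kL in \<open>auto simp: abs_mult\<close>)
  moreover have "k > 0" using mu unfolding k_def by simp
  ultimately show "ep_val L f q = 0 \<and> ep_der L f' q = 0" by auto
qed

lemma zero_data_step:
  assumes st: "st_eigenpair 0 f f'" and p: "p \<in> endpoints"
  shows "ep_der L f' (step p) = ep_der L f' p"
    and "ep_val L f (step p) = ep_val L f p + ep_der L f' p * L (fst p)"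
proof -
  have "ep_der L f' (step p) = ep_der L f' p \<and> ep_val L f (step p) = ep_val L f p + ep_der L f' p * L (fst p)"
    using p
  proof (cases rule: endpoint_cases)
    case (1 i)
    have "L i \<in> {0..L i}" using edge_length_pos[OF 1(1)] by simp
    from edge_solution_zero[OF st_eigenpair_edge_solution[OF st 1(1)] this] show ?thesis
      using step_val[OF st p] step_der[OF st p] 1(2)
      by (simp add: ep_val_def ep_der_def opposite_def algebra_simps)
  next
    case (2 i)
    have "L i \<in> {0..L i}" using edge_length_pos[OF 2(1)] by simp
    from edge_solution_zero[OF st_eigenpair_edge_solution[OF st 2(1)] this] show ?thesis
      using step_val[OF st p] step_der[OF st p] 2(2)
      by (simp add: ep_val_def ep_der_def opposite_def algebra_simps)
  qed
  then show "ep_der L f' (step p) = ep_der L f' p"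
    and "ep_val L f (step p) = ep_val L f p + ep_der L f' p * L (fst p)"
    by auto
qed

lemma st_eigenpair_const: "st_eigenpair 0 (\<lambda>i x. c) (\<lambda>i x. 0)"
  unfolding st_eigenpair_def edge_ode_def ep_val_def ep_der_def by (simp cong: if_cong)

lemma st_eigenpair_zero_constant:
  assumes st: "st_eigenpair 0 f f'" and i: "i < m" and x: "x \<in> {0..L i}"
  shows "f i x = f 0 0"
proof -
  define d where "d = ep_der L f' start"
  have der_walk: "ep_der L f' q = d" if "q \<in> walk" for q
  proof -
    have "ep_der L f' ((step ^^ n) start) = d" for n
      unfolding d_def
      by (induction n) (simp_all add: zero_data_step(1)[OF st funpow_step_endpoint[OF start_endpoint]])
    then show ?thesis using walk_funpow[OF that] by auto
  qed
  have "(\<Sum>q\<in>walk. ep_val L f q) = (\<Sum>q\<in>walk. ep_val L f (step q))"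
    using sum.reindex_bij_betw[OF bij_betw_step_walk, of "ep_val L f"] by simp
  also have "\<dots> = (\<Sum>q\<in>walk. ep_val L f q + d * L (fst q))"
    using zero_data_step(2)[OF st] walk_subset der_walk by (intro sum.cong) auto
  also have "\<dots> = (\<Sum>q\<in>walk. ep_val L f q) + d * (\<Sum>i<m. L i)"
    by (simp add: sum.distrib sum_distrib_left sum_walk[of "\<lambda>i. d * L i"])
  finally have "d * (\<Sum>i<m. L i) = 0" by simp
  moreover have "(\<Sum>i<m. L i) > 0" using edge_length_pos edges_nonempty by (intro sum_pos) auto
  ultimately have "d = 0" by simp
  have val_walk: "ep_val L f q = f 0 0" if "q \<in> walk" for q
  proof -
    have "ep_val L f ((step ^^ n) start) = f 0 0" for n
    proof (induction n)
      case (Suc n)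
      have "(step ^^ n) start \<in> walk" unfolding walk_def by blast
      then show ?case
        using zero_data_step(2)[OF st, of "(step ^^ n) start"] walk_subset der_walk \<open>d = 0\<close> Suc by auto
    qed (simp add: start_def ep_val_def)
    then show ?thesis using walk_funpow[OF that] by auto
  qed
  have "1 * f i x + (- 1) * f 0 0 = 0"
  proof (rule st_eigenpair_vanishes_if_walk_data_vanish[OF st_eigenpair_lincomb[OF st st_eigenpair_const] _ i x])
    fix q assume q: "q \<in> walk"
    have "ep_val L (\<lambda>i x. 1 * f i x + (- 1) * f 0 0) q = ep_val L f q - f 0 0"
      and "ep_der L (\<lambda>i x. 1 * f' i x + (- 1) * 0) q = ep_der L f' q"
      unfolding ep_val_def ep_der_def by simp_all
    then show "ep_val L (\<lambda>i x. 1 * f i x + (- 1) * f 0 0) q = 0 \<and>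
               ep_der L (\<lambda>i x. 1 * f' i x + (- 1) * 0) q = 0"
      using val_walk[OF q] der_walk[OF q] \<open>d = 0\<close> by simp
  qed
  then show ?thesis by simp
qed

lemma st_eigenvalue_eq_frequency_sq:
  assumes st: "st_eigenpair mu f f'" and nonzero: "\<exists>i<m. \<exists>x\<in>{0..L i}. f i x \<noteq> 0"
  shows "\<exists>k::nat. mu = (2 * pi * k / (\<Sum>i<m. L i))^2"
proof -
  have total_pos: "(\<Sum>i<m. L i) > 0" using edge_length_pos edges_nonempty by (intro sum_pos) auto
  consider "mu < 0" | "mu = 0" | "mu > 0" by linarith
  then show ?thesis
  proof cases
    case 1
    then show ?thesis using st_eigenpair_neg_vanishes[OF st] nonzero by blast
  next
    case 2
    then show ?thesis by (intro exI[of _ 0]) simp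
  next
    case 3
    then obtain n :: int where n: "sqrt mu * (\<Sum>i<m. L i) = 2 * pi * n"
      using st_eigenpair_pos_quantized[OF st _ nonzero] by blast
    have "2 * pi * n > 0" using n 3 total_pos by (metis mult_pos_pos real_sqrt_gt_zero)
    then have "n > 0" by (simp add: zero_less_mult_iff)
    have "mu = (sqrt mu)^2" using 3 by simp
    also have "sqrt mu = 2 * pi * real (nat n) / (\<Sum>i<m. L i)"
      using n \<open>n > 0\<close> total_pos by (simp add: field_simps)
    finally show ?thesis by blast
  qed
qed

lemma card_zero_eigenfamily_le:
  assumes indep: "lin_indep_on m L n fs" and S: "S \<subseteq> {..<n}"
    and st: "\<And>j. j \<in> S \<Longrightarrow> st_eigenpair 0 (fs j) (D j)"
  shows "card S \<le> 1"
proof (rule ccontr)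
  assume "\<not> card S \<le> 1"
  then have "Suc (Suc 0) \<le> card S" by simp
  then obtain j1 j2 where j: "j1 \<in> S" "j2 \<in> S" "j1 \<noteq> j2"
    by (auto simp: card_le_Suc_iff)
  define c where "c j = (if j = j1 then fs j2 0 0 else - fs j1 0 0)" for j
  have const: "fs j i x = fs j 0 0" if "j \<in> {j1, j2}" "i < m" "x \<in> {0..L i}" for j i x
    using st_eigenpair_zero_constant[OF st] j that by blast
  have "c j = 0" if "j \<in> {j1, j2}" for j
    by (rule lin_indep_on_sum_subset[OF indep _ _ that]) (use S j const c_def in auto)
  then have "fs j1 0 0 = 0" using j unfolding c_def by (metis insertI1 insertI2 neg_equal_0_iff_equal singletonI)
  then have "\<forall>i<m. \<forall>x\<in>{0..L i}. fs j1 i x = 0" using const by simp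
  then show False using lin_indep_on_nonzero[OF indep] j S by blast
qed

lemma card_pos_eigenfamily_le:
  assumes indep: "lin_indep_on m L n fs" and S: "S \<subseteq> {..<n}" and mu: "mu > 0"
    and st: "\<And>j. j \<in> S \<Longrightarrow> st_eigenpair mu (fs j) (D j)"
  shows "card S \<le> 2"
proof (rule ccontr)
  assume "\<not> card S \<le> 2"
  then have "Suc (Suc (Suc 0)) \<le> card S" by simp
  then obtain j1 j2 j3 where j: "j1 \<in> S" "j2 \<in> S" "j3 \<in> S" "j1 \<noteq> j2" "j1 \<noteq> j3" "j2 \<noteq> j3"
    by (auto simp: card_le_Suc_iff)
  obtain a b c where abc: "a \<noteq> 0 \<or> b \<noteq> 0 \<or> c \<noteq> 0"
    "a * D j1 0 0 + b * D j2 0 0 + c * D j3 0 0 = 0" "a * fs j1 0 0 + b * fs j2 0 0 + c * fs j3 0 0 = 0"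
    using two_linear_forms_common_nontrivial_zero[of "D j1 0 0" "D j2 0 0" "D j3 0 0"
        "fs j1 0 0" "fs j2 0 0" "fs j3 0 0"] by blast
  \<comment> \<open>a combination with vanishing Cauchy data at \<open>start\<close>\<close>
  from st_eigenpair_lincomb[OF st_eigenpair_lincomb[OF st[OF j(1)] st[OF j(2)]] st[OF j(3)], of 1 a b c]
  have "st_eigenpair mu (\<lambda>i x. 1 * (a * fs j1 i x + b * fs j2 i x) + c * fs j3 i x)
          (\<lambda>i x. 1 * (a * D j1 i x + b * D j2 i x) + c * D j3 i x)" .
  from st_eigenpair_pos_vanishes[OF this mu]
  have zero: "a * fs j1 i x + b * fs j2 i x + c * fs j3 i x = 0" if "i < m" "x \<in> {0..L i}" for i x
    using abc that by simp
  define cc where "cc j = (if j = j1 then a else if j = j2 then b else c)" for j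
  have sum_cc: "(\<Sum>j\<in>{j1, j2, j3}. cc j * fs j i x) = a * fs j1 i x + b * fs j2 i x + c * fs j3 i x"
    for i x using j(4-6) unfolding cc_def by (simp add: algebra_simps)
  have "cc j = 0" if "j \<in> {j1, j2, j3}" for j
    by (rule lin_indep_on_sum_subset[OF indep _ _ that, of cc]) (use S j(1-3) zero sum_cc in auto)
  then have "cc j1 = 0" "cc j2 = 0" "cc j3 = 0" by simp_all
  then show False using abc(1) j(4-6) unfolding cc_def by simp
qed

lemma st_eigenfamily_bound:
  assumes total: "(\<Sum>i<m. L i) = real N" and odd: "odd N"
    and family: "\<forall>j<N+1. mu j \<le> t \<and> st_eigenfunction m L V (mu j) (fs j)"
    and indep: "lin_indep_on m L (N+1) fs"
  shows "(pi * (N+1) / N)^2 \<le> t"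
proof (rule ccontr)
  assume "\<not> ?thesis"
  then have t: "t < (pi * (N+1) / N)^2" by simp
  obtain K where K: "N = 2*K + 1" using odd oddE by blast
  then have N_pos: "real N > 0" by simp
  have "\<forall>j. \<exists>d. j < N+1 \<longrightarrow> st_eigenpair (mu j) (fs j) d"
    using family st_eigenfunction_iff by blast
  then obtain D where D: "\<And>j. j < N+1 \<Longrightarrow> st_eigenpair (mu j) (fs j) (D j)" by metis
  have "\<exists>k\<le>K. mu j = (2 * pi * k / N)^2" if j: "j < N+1" for j
  proof -
    obtain k :: nat where k: "mu j = (2 * pi * k / N)^2"
      using st_eigenvalue_eq_frequency_sq[OF D[OF j] lin_indep_on_nonzero[OF indep j]] total by auto
    then have "(2 * pi * k / N)^2 < (pi * (N+1) / N)^2" using family j t by force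
    then have "2 * pi * k / N < pi * (N+1) / N"
      by (rule power_less_imp_less_base) (simp add: N_pos)
    then have "pi * real (2 * k) < pi * real (N + 1)" using N_pos by (simp add: field_simps)
    then have "2 * k < N + 1" using pi_gt_zero mult_less_cancel_left_pos of_nat_less_iff by blast
    then show ?thesis using k K by (intro exI[of _ k]) auto
  qed
  then obtain kk where kk: "\<And>j. j < N+1 \<Longrightarrow> kk j \<le> K \<and> mu j = (2 * pi * kk j / N)^2" by metis
  define A where "A k = {j. j < N+1 \<and> kk j = k}" for k
  have card_A: "card (A k) \<le> (if k = 0 then 1 else 2)" for k
  proof (cases "k = 0")
    case True
    then show ?thesis
      using card_zero_eigenfamily_le[OF indep, of "A 0" D] D kk unfolding A_def by force
  next
    case False
    then have "(2 * pi * k / N)^2 > 0" using N_pos by simp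
    with False show ?thesis
      using card_pos_eigenfamily_le[OF indep, of "A k" "(2 * pi * k / N)^2" D] D kk
      unfolding A_def by force
  qed
  have "(\<Union>k\<le>K. A k) = {..<N+1}" unfolding A_def using kk by auto
  then have "N + 1 = card (\<Union>k\<le>K. A k)" by simp
  also have "\<dots> = (\<Sum>k\<le>K. card (A k))"
    by (rule card_UN_disjoint) (auto simp: A_def)
  also have "\<dots> \<le> (\<Sum>k\<le>K. if k = 0 then 1 else 2)"
    by (rule sum_mono) (rule card_A)
  also have "\<dots> = N" using K by (induction K arbitrary: N) auto
  finally show False by simp
qed

lemma st_eigenvalue_ge:
  assumes total: "(\<Sum>i<m. L i) = real N" and odd: "odd N"
    and nonempty: "\<exists>t fs mu. (\<forall>j<N+1. mu j \<le> t \<and> st_eigenfunction m L V (mu j) (fs j))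
                                \<and> lin_indep_on m L (N+1) fs"
  shows "(pi * (N+1) / N)^2 \<le> st_eigenvalue m L V (N+1)"
  unfolding st_eigenvalue_def
  using nonempty st_eigenfamily_bound[OF total odd] by (intro cInf_greatest) auto

end

section \<open>Explicit eigenfunctions for integer edge lengths\<close>

lemma has_integral_cos_multiple:
  fixes n :: int and L :: real
  assumes L: "L > 0"
  shows "((\<lambda>x. cos (pi * n * x / L)) has_integral (if n = 0 then L else 0)) {0..L}"
proof (cases "n = 0")
  case True
  then show ?thesis using has_integral_const_real[of "1::real" 0 L] L by simp
next
  case False
  define F where "F x = L / (pi * n) * sin (pi * n * x / L)" for x
  have "(F has_vector_derivative cos (pi * n * x / L)) (at x within {0..L})" for x
  proof -
    have "(F has_real_derivative (L / (pi * n) * (cos (pi * n * x / L) * (pi * n / L)))) (at x within {0..L})"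
      unfolding F_def by (auto intro!: derivative_eq_intros)
    moreover have "L / (pi * n) * (cos (pi * n * x / L) * (pi * n / L)) = cos (pi * n * x / L)"
      using False L by (simp add: field_simps)
    ultimately show ?thesis by (simp add: has_real_derivative_iff_has_vector_derivative)
  qed
  then have "((\<lambda>x. cos (pi * n * x / L)) has_integral (F L - F 0)) {0..L}"
    using L by (intro fundamental_theorem_of_calculus) auto
  moreover have "F L - F 0 = 0" unfolding F_def using L by (simp add: mult.commute)
  ultimately show ?thesis using False by simp
qed

lemma has_integral_sin_sin:
  fixes a b :: nat and L :: real
  assumes L: "L > 0" and ab: "a \<ge> 1" "b \<ge> 1"
  shows "((\<lambda>x. sin (pi * a * x / L) * sin (pi * b * x / L)) has_integral (if a = b then L/2 else 0)) {0..L}"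
proof -
  have product: "sin (pi * a * x / L) * sin (pi * b * x / L)
      = (1/2) * cos (pi * of_int (int a - int b) * x / L) - (1/2) * cos (pi * of_int (int a + int b) * x / L)"
    for x
  proof -
    have "cos (pi * of_int (int a - int b) * x / L) = cos (pi * a * x / L - pi * b * x / L)"
      by (simp add: algebra_simps diff_divide_distrib)
    moreover have "cos (pi * of_int (int a + int b) * x / L) = cos (pi * a * x / L + pi * b * x / L)"
      by (simp add: algebra_simps add_divide_distrib)
    ultimately show ?thesis by (simp add: cos_diff cos_add field_simps)
  qed
  have "((\<lambda>x. (1/2) * cos (pi * of_int (int a - int b) * x / L) - (1/2) * cos (pi * of_int (int a + int b) * x / L))
      has_integral ((1/2) * (if int a - int b = 0 then L else 0) - (1/2) * (if int a + int b = 0 then L else 0))) {0..L}"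
    by (intro has_integral_diff has_integral_mult_right has_integral_cos_multiple L)
  moreover have "(1/2) * (if int a - int b = 0 then L else 0) - (1/2) * (if int a + int b = 0 then L else 0)
      = (if a = b then L/2 else 0)" using ab by auto
  ultimately show ?thesis unfolding product by simp
qed

lemma has_integral_cos_cos:
  fixes a b :: nat
  shows "((\<lambda>x. cos (2 * pi * a * x) * cos (2 * pi * b * x)) has_integral
           (if a = b then (if a = 0 then 1 else 1/2) else 0)) {0..1}"
proof -
  have product: "cos (2 * pi * a * x) * cos (2 * pi * b * x)
      = (1/2) * cos (pi * of_int (2 * int a - 2 * int b) * x / 1) + (1/2) * cos (pi * of_int (2 * int a + 2 * int b) * x / 1)"
    for x
  proof -
    have "cos (pi * of_int (2 * int a - 2 * int b) * x / 1) = cos (2 * pi * a * x - 2 * pi * b * x)"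
      by (simp add: algebra_simps)
    moreover have "cos (pi * of_int (2 * int a + 2 * int b) * x / 1) = cos (2 * pi * a * x + 2 * pi * b * x)"
      by (simp add: algebra_simps)
    ultimately show ?thesis by (simp add: cos_diff cos_add field_simps)
  qed
  have "((\<lambda>x. (1/2) * cos (pi * of_int (2 * int a - 2 * int b) * x / 1) + (1/2) * cos (pi * of_int (2 * int a + 2 * int b) * x / 1))
      has_integral ((1/2) * (if 2 * int a - 2 * int b = 0 then 1 else 0) + (1/2) * (if 2 * int a + 2 * int b = 0 then 1 else 0))) {0..1}"
    using has_integral_cos_multiple[of "1::real" "2 * int a - 2 * int b"]
      has_integral_cos_multiple[of "1::real" "2 * int a + 2 * int b"]
    by (intro has_integral_add has_integral_mult_right) simp_all
  moreover have "(1/2) * (if 2 * int a - 2 * int b = 0 then 1 else 0) + (1/2) * (if 2 * int a + 2 * int b = 0 then (1::real) else 0)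
      = (if a = b then (if a = 0 then 1 else 1/2) else 0)" by auto
  ultimately show ?thesis unfolding product by simp
qed

lemma coefficient_zero_if_orthogonal:
  fixes g :: "nat \<Rightarrow> real \<Rightarrow> real"
  assumes zero: "\<And>x. x \<in> {a..b} \<Longrightarrow> (\<Sum>j\<in>S. c j * g j x) = 0" and S: "finite S" "j0 \<in> S"
    and orth: "\<And>j. j \<in> S \<Longrightarrow> ((\<lambda>x. g j x * g j0 x) has_integral (if j = j0 then nn else 0)) {a..b}"
    and nn: "nn \<noteq> 0"
  shows "c j0 = 0"
proof -
  have "((\<lambda>x. \<Sum>j\<in>S. c j * (g j x * g j0 x)) has_integral (\<Sum>j\<in>S. c j * (if j = j0 then nn else 0))) {a..b}"
    by (intro has_integral_sum S has_integral_mult_right orth)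
  moreover have "(\<Sum>j\<in>S. c j * (if j = j0 then nn else 0)) = c j0 * nn"
    using S by (simp add: if_distrib cong: if_cong)
  moreover have "((\<lambda>x. \<Sum>j\<in>S. c j * (g j x * g j0 x)) has_integral 0) {a..b}"
  proof (rule has_integral_eq[OF _ has_integral_0])
    fix x assume "x \<in> {a..b}"
    then have "(\<Sum>j\<in>S. c j * g j x) * g j0 x = 0" using zero by simp
    then show "0 = (\<Sum>j\<in>S. c j * (g j x * g j0 x))" by (simp add: sum_distrib_right mult.assoc)
  qed
  ultimately have "c j0 * nn = 0" using has_integral_unique by metis
  then show ?thesis using nn by simp
qed

lemma cos_2pi_mult_nat: "cos (2 * pi * real k * real l) = 1" and sin_2pi_mult_nat: "sin (2 * pi * real k * real l) = 0"
proof -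
  have e: "2 * pi * real k * real l = real (2 * k * l) * pi" by simp
  show "cos (2 * pi * real k * real l) = 1" unfolding e cos_npi by simp
  show "sin (2 * pi * real k * real l) = 0" unfolding e by (rule sin_npi)
qed

text \<open>With integer edge lengths, \<open>cos (2 * pi * k * x)\<close> on every edge is a standard eigenfunction:
  it takes the value 1 and has derivative 0 at every endpoint.\<close>

lemma cos_st_eigenfunction:
  "st_eigenfunction m (\<lambda>i. real (len i)) V ((2*pi*real k)^2) (\<lambda>i x. cos (2*pi*real k*x))"
  unfolding st_eigenfunction_def
proof (intro exI[of _ "\<lambda>i x. - (2*pi*real k) * sin (2*pi*real k*x)"] conjI ballI)
  show "edge_ode m (\<lambda>i. real (len i)) ((2 * pi * real k)\<^sup>2) (\<lambda>i x. cos (2 * pi * real k * x))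
     (\<lambda>i x. - (2 * pi * real k) * sin (2 * pi * real k * x))"
    unfolding edge_ode_def by (auto intro!: derivative_eq_intros simp: power2_eq_square)
  fix v p q
  show "ep_val (\<lambda>i. real (len i)) (\<lambda>i x. cos (2 * pi * real k * x)) p =
        ep_val (\<lambda>i. real (len i)) (\<lambda>i x. cos (2 * pi * real k * x)) q"
    unfolding ep_val_def by (simp add: cos_2pi_mult_nat)
next
  fix v
  show "(\<Sum>p\<in>v. ep_der (\<lambda>i. real (len i)) (\<lambda>i x. - (2 * pi * real k) * sin (2 * pi * real k * x)) p) = 0"
    by (rule sum.neutral) (simp add: ep_der_def sin_2pi_mult_nat)
qed

lemma cos_lin_indep_on:
  assumes m: "0 < m" and len: "len 0 \<ge> 1"
  shows "lin_indep_on m (\<lambda>i. real (len i)) n (\<lambda>k i x. cos (2*pi*real k*x))"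
  unfolding lin_indep_on_def
proof (intro allI impI)
  fix c :: "nat \<Rightarrow> real" and j0
  assume zero: "\<forall>i<m. \<forall>x\<in>{0..real (len i)}. (\<Sum>j<n. c j * cos (2*pi*real j*x)) = 0" and j0: "j0 < n"
  show "c j0 = 0"
  proof (rule coefficient_zero_if_orthogonal[where g = "\<lambda>j x. cos (2*pi*real j*x)" and a = 0 and b = 1
        and S = "{..<n}" and nn = "if j0 = 0 then 1 else 1/2"])
    fix x :: real assume "x \<in> {0..1}"
    then have "x \<in> {0..real (len 0)}" using len by auto
    then show "(\<Sum>j<n. c j * cos (2*pi*real j*x)) = 0" using zero m by blast
  next
    fix j assume "j \<in> {..<n}"
    show "((\<lambda>x. cos (2*pi*real j*x) * cos (2*pi*real j0*x)) has_integral
         (if j = j0 then if j0 = 0 then 1 else 1 / 2 else 0)) {0..1}"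
      using has_integral_cos_cos[of j j0] by (cases "j = j0") auto
  qed (use j0 in auto)
qed

lemma cos_st_eigenfamily:
  assumes "0 < m" and "len 0 \<ge> 1"
  shows "\<exists>t fs mu. (\<forall>j<n. mu j \<le> t \<and> st_eigenfunction m (\<lambda>i. real (len i)) V (mu j) (fs j))
                   \<and> lin_indep_on m (\<lambda>i. real (len i)) n fs"
proof (intro exI conjI allI impI)
  fix j assume "j < n"
  then show "(2*pi*real j)^2 \<le> (2*pi*real n)^2" by (intro power_mono) auto
  show "st_eigenfunction m (\<lambda>i. real (len i)) V ((2*pi*real j)^2) (\<lambda>i x. cos (2*pi*real j*x))"
    by (rule cos_st_eigenfunction)
next
  show "lin_indep_on m (\<lambda>i. real (len i)) n (\<lambda>k i x. cos (2*pi*real k*x))"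
    by (rule cos_lin_indep_on[OF assms(1), of len, OF assms(2)])
qed

lemma dir_eigenfunction_nonpos_vanishes:
  assumes dir: "dir_eigenfunction m L mu f" and mu: "mu \<le> 0" and i: "i < m" and L: "L i > 0"
    and x: "x \<in> {0..L i}"
  shows "f i x = 0"
proof -
  obtain f' where ode: "edge_ode m L mu f f'" and bc: "\<forall>i<m. f i 0 = 0 \<and> f i (L i) = 0"
    using dir unfolding dir_eigenfunction_def by blast
  have sol: "edge_solution (L i) mu (f i) (f' i)" using ode i unfolding edge_ode_iff_edge_solution by blast
  have bc_i: "f i 0 = 0" "f i (L i) = 0" using bc i by auto
  have L_in: "L i \<in> {0..L i}" using L by simp
  have "f' i 0 = 0"
  proof (cases "mu = 0")
    case True
    with sol have "edge_solution (L i) 0 (f i) (f' i)" by simp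
    from edge_solution_zero(2)[OF this L_in] show ?thesis using bc_i L by simp
  next
    case False
    then have mu: "mu < 0" using mu by simp
    define k where "k = sqrt (- mu)"
    have "exp (- (k * L i)) < exp (k * L i)" using mu L unfolding k_def by simp
    moreover have "f' i (L i) = f' i 0 * exp (k * L i)" "f' i (L i) = f' i 0 * exp (- (k * L i))"
      using edge_solution_neg[OF sol mu L_in] bc_i unfolding k_def by simp_all
    ultimately show ?thesis by (metis mult_cancel_left order_less_irrefl)
  qed
  with edge_solution_vanishes[OF sol _ x, of 0] bc_i L show ?thesis by simp
qed

definition edge_sine :: "(nat \<Rightarrow> nat) \<Rightarrow> nat \<times> nat \<Rightarrow> nat \<Rightarrow> real \<Rightarrow> real" where
  "edge_sine len ik i x = (if i = fst ik then sin (pi * real (snd ik) * x / real (len (fst ik))) else 0)"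

lemma edge_sine_dir_eigenfunction:
  assumes len: "len (fst ik) > 0"
  shows "dir_eigenfunction m (\<lambda>i. real (len i)) ((pi * real (snd ik) / real (len (fst ik)))^2) (edge_sine len ik)"
proof -
  define w where "w = pi * real (snd ik) / real (len (fst ik))"
  have sine: "edge_sine len ik i = (if i = fst ik then (\<lambda>x. sin (w * x)) else (\<lambda>x. 0))" for i
    unfolding edge_sine_def w_def by (auto simp: fun_eq_iff)
  have "edge_ode m (\<lambda>i. real (len i)) (w^2) (edge_sine len ik)
      (\<lambda>i x. if i = fst ik then w * cos (w * x) else 0)"
    unfolding edge_ode_def sine by (auto simp: power2_eq_square intro!: derivative_eq_intros)
  moreover have "edge_sine len ik i 0 = 0 \<and> edge_sine len ik i (real (len i)) = 0" for i
    unfolding edge_sine_def using len by (simp add: sin_npi2)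
  ultimately show ?thesis unfolding dir_eigenfunction_def w_def by blast
qed

lemma edge_sine_lin_indep_on:
  assumes inj: "inj_on h {..<n}" and h: "\<And>j. j < n \<Longrightarrow> fst (h j) < m \<and> 1 \<le> snd (h j) \<and> len (fst (h j)) > 0"
  shows "lin_indep_on m (\<lambda>i. real (len i)) n (\<lambda>j. edge_sine len (h j))"
  unfolding lin_indep_on_def
proof (intro allI impI)
  fix c :: "nat \<Rightarrow> real" and j0
  assume zero: "\<forall>i<m. \<forall>x\<in>{0..real (len i)}. (\<Sum>j<n. c j * edge_sine len (h j) i x) = 0" and j0: "j0 < n"
  define i0 where "i0 = fst (h j0)"
  define S where "S = {j \<in> {..<n}. fst (h j) = i0}"
  define g where "g j x = sin (pi * real (snd (h j)) * x / real (len i0))" for j x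
  have i0: "i0 < m" "real (len i0) > 0" unfolding i0_def using h[OF j0] by auto
  show "c j0 = 0"
  proof (rule coefficient_zero_if_orthogonal[where g = g and S = S and nn = "real (len i0) / 2"])
    fix x assume x: "x \<in> {0..real (len i0)}"
    have "(\<Sum>j\<in>S. c j * g j x) = (\<Sum>j<n. if fst (h j) = i0 then c j * g j x else 0)"
      unfolding S_def by (rule sum.inter_filter) simp
    also have "\<dots> = (\<Sum>j<n. c j * edge_sine len (h j) i0 x)"
      unfolding edge_sine_def g_def by (intro sum.cong) auto
    also have "\<dots> = 0" using zero i0 x by blast
    finally show "(\<Sum>j\<in>S. c j * g j x) = 0" .
  next
    fix j assume "j \<in> S"
    then have j: "j < n" "fst (h j) = i0" unfolding S_def by auto
    have "snd (h j) = snd (h j0) \<longleftrightarrow> j = j0"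
      using inj j j0 unfolding i0_def inj_on_def by (auto simp: prod_eq_iff)
    then show "((\<lambda>x. g j x * g j0 x) has_integral (if j = j0 then real (len i0) / 2 else 0)) {0..real (len i0)}"
      using has_integral_sin_sin[OF i0(2), of "snd (h j)" "snd (h j0)"] h[OF j(1)] h[OF j0]
      unfolding g_def by simp
  qed (use i0 j0 in \<open>auto simp: S_def i0_def\<close>)
qed

lemma dir_eigenvalue_le_pi_sq:
  assumes len: "\<And>i. i < m \<Longrightarrow> len i > 0" and m: "0 < m"
  shows "dir_eigenvalue m (\<lambda>i. real (len i)) (\<Sum>i<m. len i) \<le> pi^2"
proof -
  define N where "N = (\<Sum>i<m. len i)"
  define T where "T = Sigma {..<m} (\<lambda>i. {1..len i})"
  have "finite T" "card T = N" unfolding T_def N_def by simp_all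
  then obtain h where h: "bij_betw h {..<N} T" using ex_bij_betw_nat_finite lessThan_atLeast0 by metis
  have hT: "fst (h j) < m \<and> 1 \<le> snd (h j) \<and> snd (h j) \<le> len (fst (h j)) \<and> len (fst (h j)) > 0"
    if "j < N" for j
  proof -
    have "h j \<in> T" using bij_betw_apply[OF h] that by simp
    then show ?thesis using len unfolding T_def by (cases "h j") auto
  qed
  define D where "D = {t. \<exists>fs mu. (\<forall>j<N. mu j \<le> t \<and> dir_eigenfunction m (\<lambda>i. real (len i)) (mu j) (fs j))
      \<and> lin_indep_on m (\<lambda>i. real (len i)) N fs}"
  have "pi^2 \<in> D"
    unfolding D_def
  proof (intro CollectI exI conjI allI impI)
    fix j assume j: "j < N"
    show "dir_eigenfunction m (\<lambda>i. real (len i)) ((pi * real (snd (h j)) / real (len (fst (h j))))^2) (edge_sine len (h j))"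
      using hT[OF j] by (intro edge_sine_dir_eigenfunction) auto
    have "pi * real (snd (h j)) / real (len (fst (h j))) \<le> pi" using hT[OF j] by (simp add: divide_le_eq)
    then show "(pi * real (snd (h j)) / real (len (fst (h j))))^2 \<le> pi^2" by (simp add: power_mono)
  next
    show "lin_indep_on m (\<lambda>i. real (len i)) N (\<lambda>j. edge_sine len (h j))"
      using h hT by (intro edge_sine_lin_indep_on) (auto simp: bij_betw_def)
  qed
  moreover have "bdd_below D"
  proof (rule bdd_belowI)
    fix t assume "t \<in> D"
    then obtain fs mu where family: "\<forall>j<N. mu j \<le> t \<and> dir_eigenfunction m (\<lambda>i. real (len i)) (mu j) (fs j)"
      and indep: "lin_indep_on m (\<lambda>i. real (len i)) N fs" unfolding D_def by blast
    have "0 < N" using len m unfolding N_def by (metis lessThan_iff sum_pos2 finite_lessThan less_imp_le zero_less_iff_neq_zero)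
    then have "\<not> mu 0 \<le> 0"
      using dir_eigenfunction_nonpos_vanishes[of m _ "mu 0" "fs 0"] family len lin_indep_on_nonzero[OF indep]
      by (metis of_nat_0_less_iff)
    then show "0 \<le> t" using family \<open>0 < N\<close> by force
  qed
  ultimately show ?thesis unfolding dir_eigenvalue_def D_def N_def by (rule cInf_lower)
qed

theorem mainTheorem16:
  fixes m :: nat and len :: "nat \<Rightarrow> nat" and V :: "(nat \<times> bool) set set"
  assumes "cycle_graph m (\<lambda>i. real (len i)) V"
    and "Gcd (len ` {..<m}) = 1"
    and "odd (\<Sum>i<m. len i)"
  shows "st_eigenvalue m (\<lambda>i. real (len i)) V ((\<Sum>i<m. len i) + 1)
           > dir_eigenvalue m (\<lambda>i. real (len i)) (\<Sum>i<m. len i)"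
proof -
  define N where "N = (\<Sum>i<m. len i)"
  have "0 < m" using assms(3) by (cases m) auto
  then interpret cycle m "\<lambda>i. real (len i)" V using assms(1) by unfold_locales
  have len_pos: "len i > 0" if "i < m" for i using edge_length_pos[OF that] by simp
  have "(\<Sum>i<m. real (len i)) = real N" "odd N" "len 0 \<ge> 1"
    using assms(3) len_pos[OF \<open>0 < m\<close>] unfolding N_def by simp_all
  from st_eigenvalue_ge[OF this(1,2) cos_st_eigenfamily[where len = len, OF \<open>0 < m\<close> this(3)]]
  have "(pi * (N+1) / N)^2 \<le> st_eigenvalue m (\<lambda>i. real (len i)) V (N+1)" .
  moreover have "dir_eigenvalue m (\<lambda>i. real (len i)) N \<le> pi^2"
    unfolding N_def using dir_eigenvalue_le_pi_sq len_pos \<open>0 < m\<close> by blast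
  moreover have "pi^2 < (pi * (N+1) / N)^2"
    using assms(3) unfolding N_def[symmetric] by (intro power_strict_mono) (auto simp: field_simps elim: oddE)
  ultimately show ?thesis unfolding N_def by linarith
qed

end
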